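(* There is a universal constant $c$ such that for all $d\ge2$, $n\ge1$ and every $n$-qudit unitary $U$, $$M[U]\le c\,[\log n+\log d]\,(\mathrm{CiS}[U]+1).$$
   Context: Let $V=\mathbb{Z}_d\times\mathbb{Z}_d$; for $a=(s,t)\in V$, $P_a=X^sZ^t$ with $X|j\rangle=|j+1\bmod d\rangle$, $Z|j\rangle=e^{2\pi ij/d}|j\rangle$; $P_{\vec a}=\bigotimes_iP_{a_i}$, $|\vec a|=\#\{i:a_i\ne(0,0)\}$; weight-1 Paulis are $P_{\vec a}$ with $|\vec a|=1$. $\|A\|_2=(d^{-n}\mathrm{Tr}(A^\dagger A))^{1/2}$. For $\|O\|_2=1$, $P_O[\vec a]=d^{-2n}|\mathrm{Tr}(OP_{\vec a})|^2$, $H[O]=-\sum_{\vec a}P_O[\vec a]\log P_O[\vec a]$ (log base 2), $I[O]=\sum_{\vec a}|\vec a|P_O[\vec a]$. Magic entropy: $M[U]=\max_{O\text{ weight-1 Pauli}}H[UOU^\dagger]$. Circuit sensitivity: $\mathrm{CiS}[U]=\max_{\|O\|_2=1}|I[UOU^\dagger]-I[O]|$. *)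

theory Defs
  imports Complex_Main "Jordan_Normal_Form.Matrix"
begin

definition mtrace :: "complex mat \<Rightarrow> complex" where
  "mtrace A = (\<Sum>i<dim_row A. A $$ (i,i))"

definition adj :: "complex mat \<Rightarrow> complex mat" where
  "adj A = mat (dim_col A) (dim_row A) (\<lambda>(i,j). cnj (A $$ (j,i)))"

definition kron :: "complex mat \<Rightarrow> complex mat \<Rightarrow> complex mat" where
  "kron A B = mat (dim_row A * dim_row B) (dim_col A * dim_col B)
     (\<lambda>(i,j). A $$ (i div dim_row B, j div dim_col B) * B $$ (i mod dim_row B, j mod dim_col B))"

definition unitary_mat :: "nat \<Rightarrow> complex mat \<Rightarrow> bool" where
  "unitary_mat N U \<longleftrightarrow> U \<in> carrier_mat N N \<and> U * adj U = 1\<^sub>m N"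

definition shiftX :: "nat \<Rightarrow> complex mat" where
  "shiftX d = mat d d (\<lambda>(j,k). if j = (k + 1) mod d then 1 else 0)"

definition clockZ :: "nat \<Rightarrow> complex mat" where
  "clockZ d = mat d d (\<lambda>(j,k). if j = k then exp (2 * pi * \<i> * of_nat j / of_nat d) else 0)"

definition pauli1 :: "nat \<Rightarrow> nat \<times> nat \<Rightarrow> complex mat" where
  "pauli1 d a = (shiftX d ^\<^sub>m fst a) * (clockZ d ^\<^sub>m snd a)"

text \<open>V^n, with V = Z_d x Z_d represented by {0..<d} x {0..<d}.\<close>
definition pauli_vecs :: "nat \<Rightarrow> nat \<Rightarrow> (nat \<times> nat) list set" where
  "pauli_vecs d n = {as. length as = n \<and> set as \<subseteq> {0..<d} \<times> {0..<d}}"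

definition pauli :: "nat \<Rightarrow> (nat \<times> nat) list \<Rightarrow> complex mat" where
  "pauli d as = foldr (\<lambda>a M. kron (pauli1 d a) M) as (1\<^sub>m 1)"

text \<open>Weight |a| = number of non-identity tensor factors.\<close>
definition pweight :: "(nat \<times> nat) list \<Rightarrow> nat" where
  "pweight as = length (filter (\<lambda>a. a \<noteq> (0,0)) as)"

definition norm2 :: "nat \<Rightarrow> nat \<Rightarrow> complex mat \<Rightarrow> real" where
  "norm2 d n A = sqrt (Re (mtrace (adj A * A)) / real d ^ n)"

definition pauli_prob :: "nat \<Rightarrow> nat \<Rightarrow> complex mat \<Rightarrow> (nat \<times> nat) list \<Rightarrow> real" where
  "pauli_prob d n Ob as = (cmod (mtrace (Ob * pauli d as)))\<^sup>2 / real d ^ (2 * n)"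

definition pauli_entropy :: "nat \<Rightarrow> nat \<Rightarrow> complex mat \<Rightarrow> real" where
  "pauli_entropy d n Ob =
     - (\<Sum>as\<in>pauli_vecs d n. let p = pauli_prob d n Ob as in
          if p = 0 then 0 else p * log 2 p)"

definition influence :: "nat \<Rightarrow> nat \<Rightarrow> complex mat \<Rightarrow> real" where
  "influence d n Ob = (\<Sum>as\<in>pauli_vecs d n. real (pweight as) * pauli_prob d n Ob as)"

definition magic_entropy :: "nat \<Rightarrow> nat \<Rightarrow> complex mat \<Rightarrow> real" where
  "magic_entropy d n U =
     Max ((\<lambda>as. pauli_entropy d n (U * pauli d as * adj U)) `
          {as \<in> pauli_vecs d n. pweight as = 1})"

definition circuit_sensitivity :: "nat \<Rightarrow> nat \<Rightarrow> complex mat \<Rightarrow> real" where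
  "circuit_sensitivity d n U =
     Sup ((\<lambda>Ob. \<bar>influence d n (U * Ob * adj U) - influence d n Ob\<bar>) `
          {Ob \<in> carrier_mat (d ^ n) (d ^ n). norm2 d n Ob = 1})"

end

theory Submission
  imports Defs "Jordan_Normal_Form.Determinant"
begin

text \<open>
  By Parseval's identity for the Pauli basis, P_O is a probability distribution whenever
  ||O||_2 = 1, and conjugation by a unitary preserves this normalisation. Gibbs' inequality
  against the weights lambda^|a| bounds the entropy of any such distribution by
  (Z - 1 - I ln lambda) / ln 2, where I is its mean weight and
  Z = sum_a lambda^|a| = (1 + (d^2 - 1) lambda)^n. The choice lambda = 1/(n d^2) makes
  Z <= e and -ln lambda = ln n + 2 ln d. A weight-1 Pauli P is orthogonal to every Pauli of
  larger weight, so I[P] <= 1 and hence I[U P U^dagger] <= CiS[U] + 1.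
\<close>

definition frob_sq :: "complex mat \<Rightarrow> real" where
  "frob_sq A = (\<Sum>i<dim_row A. \<Sum>j<dim_col A. (cmod (A $$ (i,j)))\<^sup>2)"

lemma sum_lessThan_mult_nat:
  fixes f :: "nat \<Rightarrow> 'a::comm_monoid_add"
  shows "(\<Sum>i<M*N. f i) = (\<Sum>i<M. \<Sum>k<N. f (i*N+k))"
proof -
  have "(\<Sum>i<M*N. f i) = (\<Sum>i<M. sum f {i*N..<i*N+N})"
    using sum.nat_group[of f N M] by simp
  also have "\<dots> = (\<Sum>i<M. \<Sum>k<N. f (i*N+k))"
  proof (rule sum.cong[OF refl])
    fix i show "sum f {i*N..<i*N+N} = (\<Sum>k<N. f (i*N+k))"
      using sum.shift_bounds_nat_ivl[of f 0 "i*N" N]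
      by (simp add: atLeast0LessThan add.commute)
  qed
  finally show ?thesis .
qed

lemma sum2_lessThan_mult_nat:
  fixes F :: "nat \<Rightarrow> nat \<Rightarrow> 'a::comm_monoid_add"
  shows "(\<Sum>I<M*N. \<Sum>J<M'*N'. F I J) = (\<Sum>i<M. \<Sum>k<N. \<Sum>j<M'. \<Sum>l<N'. F (i*N+k) (j*N'+l))"
  by (simp add: sum_lessThan_mult_nat[of _ M N] sum_lessThan_mult_nat[of _ M' N'])

lemma sum4_swap_middle:
  fixes h :: "nat \<Rightarrow> nat \<Rightarrow> nat \<Rightarrow> nat \<Rightarrow> 'a::comm_monoid_add"
  shows "(\<Sum>i<M. \<Sum>k<N. \<Sum>j<M'. \<Sum>l<N'. h i k j l) = (\<Sum>i<M. \<Sum>j<M'. \<Sum>k<N. \<Sum>l<N'. h i k j l)"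
  by (rule sum.cong[OF refl], rule sum.swap)

lemma sum4_product:
  fixes f g :: "nat \<Rightarrow> nat \<Rightarrow> 'a::comm_semiring_1"
  shows "(\<Sum>i<M. \<Sum>k<N. \<Sum>j<M'. \<Sum>l<N'. f i j * g k l) = (\<Sum>i<M. \<Sum>j<M'. f i j) * (\<Sum>k<N. \<Sum>l<N'. g k l)"
proof -
  have "(\<Sum>i<M. \<Sum>j<M'. f i j) * (\<Sum>k<N. \<Sum>l<N'. g k l)
      = (\<Sum>i<M. \<Sum>j<M'. f i j * (\<Sum>k<N. \<Sum>l<N'. g k l))"
    by (simp add: sum_distrib_right)
  also have "\<dots> = (\<Sum>i<M. \<Sum>j<M'. \<Sum>k<N. \<Sum>l<N'. f i j * g k l)"
    by (simp add: sum_distrib_left)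
  finally show ?thesis by (subst sum4_swap_middle) simp
qed

lemma mtrace_mult:
  assumes "A \<in> carrier_mat n m" "B \<in> carrier_mat m n"
  shows "mtrace (A * B) = (\<Sum>i<n. \<Sum>l<m. A $$ (i,l) * B $$ (l,i))"
  using assms unfolding mtrace_def by (auto intro!: sum.cong simp: scalar_prod_def atLeast0LessThan)

lemma mtrace_mult_commute:
  assumes "A \<in> carrier_mat n m" "B \<in> carrier_mat m n"
  shows "mtrace (A * B) = mtrace (B * A)"
  unfolding mtrace_mult[OF assms] mtrace_mult[OF assms(2,1)]
  by (subst sum.swap) (simp add: mult.commute)

lemma adj_dim [simp]: "dim_row (adj A) = dim_col A" "dim_col (adj A) = dim_row A"
  unfolding adj_def by simp_all

lemma adj_index [simp]: "i < dim_col A \<Longrightarrow> j < dim_row A \<Longrightarrow> adj A $$ (i,j) = cnj (A $$ (j,i))"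
  unfolding adj_def by simp

lemma adj_carrier_mat: "A \<in> carrier_mat n m \<Longrightarrow> adj A \<in> carrier_mat m n"
  unfolding carrier_mat_def by simp

lemma adj_adj [simp]: "adj (adj A) = A"
  by (rule eq_matI) simp_all

lemma adj_mult:
  assumes "A \<in> carrier_mat n m" "B \<in> carrier_mat m k"
  shows "adj (A * B) = adj B * adj A"
proof (rule eq_matI)
  fix i j assume ij: "i < dim_row (adj B * adj A)" "j < dim_col (adj B * adj A)"
  have "adj (A * B) $$ (i, j) = cnj (\<Sum>l<m. A $$ (j,l) * B $$ (l,i))"
    using ij assms by (simp add: scalar_prod_def atLeast0LessThan)
  also have "\<dots> = (adj B * adj A) $$ (i,j)"
    using ij assms by (simp add: scalar_prod_def atLeast0LessThan mult.commute)
  finally show "adj (A * B) $$ (i, j) = (adj B * adj A) $$ (i, j)" .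
qed (use assms in auto)

lemma unitary_conj_carrier_mat:
  "unitary_mat N U \<Longrightarrow> A \<in> carrier_mat N N \<Longrightarrow> U * A * adj U \<in> carrier_mat N N"
  unfolding unitary_mat_def by (metis adj_carrier_mat mult_carrier_mat)

lemma frob_sq_eq_mtrace: "frob_sq A = Re (mtrace (adj A * A))"
proof -
  have A: "A \<in> carrier_mat (dim_row A) (dim_col A)" by (rule carrier_matI) simp_all
  have "mtrace (adj A * A) = (\<Sum>i<dim_col A. \<Sum>l<dim_row A. complex_of_real ((cmod (A $$ (l,i)))\<^sup>2))"
    unfolding mtrace_mult[OF adj_carrier_mat[OF A] A]
  proof (intro sum.cong refl)
    fix i l assume "i \<in> {..<dim_col A}" "l \<in> {..<dim_row A}"
    then show "adj A $$ (i,l) * A $$ (l,i) = complex_of_real ((cmod (A $$ (l,i)))\<^sup>2)"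
      using complex_norm_square[of "A $$ (l,i)"] by (simp add: mult.commute)
  qed
  then show ?thesis
    unfolding frob_sq_def by (simp add: sum.swap[of _ "{..<dim_row A}"])
qed

lemma frob_sq_unitary_conj:
  assumes "unitary_mat N U" and A: "A \<in> carrier_mat N N"
  shows "frob_sq (U * A * adj U) = frob_sq A"
proof -
  have U: "U \<in> carrier_mat N N" and UU: "U * adj U = 1\<^sub>m N"
    using assms(1) unfolding unitary_mat_def by auto
  have aU: "adj U \<in> carrier_mat N N" and aA: "adj A \<in> carrier_mat N N"
    using U A by (simp_all add: adj_carrier_mat)
  have UU': "adj U * U = 1\<^sub>m N" by (rule mat_mult_left_right_inverse[OF U aU UU])
  have "adj (U * A * adj U) * (U * A * adj U) = U * (adj A * (adj U * U) * A * adj U)"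
    using U A aU aA by (simp add: adj_mult[of _ N N _ N] assoc_mult_mat[of _ N N _ N _ N])
  also have "\<dots> = U * (adj A * A * adj U)"
    using U A aU aA by (simp add: UU')
  finally have "mtrace (adj (U * A * adj U) * (U * A * adj U)) = mtrace (adj A * A * adj U * U)"
    using U A aU aA by (simp add: mtrace_mult_commute[of U N N])
  also have "\<dots> = mtrace (adj A * A)"
    using U A aU aA by (simp add: assoc_mult_mat[of _ N N _ N _ N] UU')
  finally show ?thesis unfolding frob_sq_eq_mtrace by simp
qed

lemma kron_dim [simp]:
  "dim_row (kron A B) = dim_row A * dim_row B" "dim_col (kron A B) = dim_col A * dim_col B"
  unfolding kron_def by simp_all

lemma kron_carrier_mat:
  "A \<in> carrier_mat m m' \<Longrightarrow> B \<in> carrier_mat n n' \<Longrightarrow> kron A B \<in> carrier_mat (m*n) (m'*n')"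
  by (rule carrier_matI) (simp_all add: carrier_matD)

lemma mult_add_less_mult_nat: "i < (M::nat) \<Longrightarrow> k < N \<Longrightarrow> i * N + k < M * N"
proof -
  assume "i < M" "k < N"
  then have "i * N + k < (i + 1) * N" by simp
  also have "\<dots> \<le> M * N" using \<open>i < M\<close> by (intro mult_le_mono1) simp
  finally show ?thesis .
qed

lemma kron_index:
  assumes "i < dim_row A" "k < dim_row B" "j < dim_col A" "l < dim_col B"
  shows "kron A B $$ (i * dim_row B + k, j * dim_col B + l) = A $$ (i,j) * B $$ (k,l)"
  using assms mult_add_less_mult_nat[OF assms(1,2)] mult_add_less_mult_nat[OF assms(3,4)]
  unfolding kron_def by simp

lemma frob_sq_kron: "frob_sq (kron A B) = frob_sq A * frob_sq B"
proof -
  have "frob_sq (kron A B) = (\<Sum>i<dim_row A. \<Sum>k<dim_row B. \<Sum>j<dim_col A. \<Sum>l<dim_col B.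
      (cmod (A $$ (i,j)))\<^sup>2 * (cmod (B $$ (k,l)))\<^sup>2)"
    unfolding frob_sq_def kron_dim sum2_lessThan_mult_nat
    by (intro sum.cong refl) (simp add: kron_index norm_mult power_mult_distrib)
  then show ?thesis unfolding frob_sq_def by (simp add: sum4_product)
qed

lemma mtrace_kron_mult:
  assumes C: "C \<in> carrier_mat M M" and A: "A \<in> carrier_mat M M"
    and D: "D \<in> carrier_mat N N" and B: "B \<in> carrier_mat N N"
  shows "mtrace (kron C D * kron A B) = mtrace (C * A) * mtrace (D * B)"
proof -
  have "mtrace (kron C D * kron A B) = (\<Sum>i<M. \<Sum>k<N. \<Sum>j<M. \<Sum>l<N.
      (C $$ (i,j) * A $$ (j,i)) * (D $$ (k,l) * B $$ (l,k)))"
    unfolding mtrace_mult[OF kron_carrier_mat[OF C D] kron_carrier_mat[OF A B]] sum2_lessThan_mult_nat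
    using C D A B kron_index[of _ C _ D] kron_index[of _ A _ B]
    by (intro sum.cong refl) (simp add: carrier_matD ac_simps)
  then show ?thesis by (simp add: sum4_product mtrace_mult[OF C A] mtrace_mult[OF D B])
qed

section \<open>Tight frames of operators\<close>

definition tight_frame :: "nat \<Rightarrow> 'x set \<Rightarrow> ('x \<Rightarrow> complex mat) \<Rightarrow> bool" where
  "tight_frame N S f \<longleftrightarrow> finite S \<and> (\<forall>x\<in>S. f x \<in> carrier_mat N N) \<and>
     (\<forall>A\<in>carrier_mat N N. (\<Sum>x\<in>S. (cmod (mtrace (A * f x)))\<^sup>2) = real N * frob_sq A)"

lemma tight_frameD:
  assumes "tight_frame N S f"
  shows "finite S" "x \<in> S \<Longrightarrow> f x \<in> carrier_mat N N"
    "A \<in> carrier_mat N N \<Longrightarrow> (\<Sum>x\<in>S. (cmod (mtrace (A * f x)))\<^sup>2) = real N * frob_sq A"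
  using assms unfolding tight_frame_def by auto

lemma tight_frame_reindex:
  assumes "tight_frame N S (f \<circ> h)" "inj_on h S"
  shows "tight_frame N (h ` S) f"
  using assms unfolding tight_frame_def by (auto simp: sum.reindex)

definition block :: "nat \<Rightarrow> complex mat \<Rightarrow> nat \<Rightarrow> nat \<Rightarrow> complex mat" where
  "block N A i j = mat N N (\<lambda>(k,l). A $$ (i*N+k, j*N+l))"

lemma block_dim [simp]: "dim_row (block N A i j) = N" "dim_col (block N A i j) = N"
  unfolding block_def by simp_all

lemma block_carrier_mat: "block N A i j \<in> carrier_mat N N"
  by (rule carrier_matI) simp_all

lemma block_index [simp]: "k < N \<Longrightarrow> l < N \<Longrightarrow> block N A i j $$ (k,l) = A $$ (i*N+k, j*N+l)"
  unfolding block_def by simp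

lemma frob_sq_blocks:
  assumes "A \<in> carrier_mat (M*N) (M*N)"
  shows "frob_sq A = (\<Sum>i<M. \<Sum>j<M. frob_sq (block N A i j))"
proof -
  have "frob_sq A = (\<Sum>i<M. \<Sum>k<N. \<Sum>j<M. \<Sum>l<N. (cmod (A $$ (i*N+k, j*N+l)))\<^sup>2)"
    unfolding frob_sq_def using assms by (simp add: carrier_matD sum2_lessThan_mult_nat)
  also have "\<dots> = (\<Sum>i<M. \<Sum>j<M. \<Sum>k<N. \<Sum>l<N. (cmod (A $$ (i*N+k, j*N+l)))\<^sup>2)"
    by (rule sum4_swap_middle)
  finally show ?thesis
    unfolding frob_sq_def by simp
qed

lemma mtrace_mult_kron_blocks:
  assumes A: "A \<in> carrier_mat (M*N) (M*N)" and B: "B \<in> carrier_mat M M" and C: "C \<in> carrier_mat N N"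
  shows "mtrace (A * kron B C) = mtrace (mat M M (\<lambda>(i,j). mtrace (block N A i j * C)) * B)"
proof -
  have "mtrace (A * kron B C) = (\<Sum>i<M. \<Sum>j<M. \<Sum>k<N. \<Sum>l<N. A $$ (i*N+k, j*N+l) * (B $$ (j,i) * C $$ (l,k)))"
    unfolding mtrace_mult[OF A kron_carrier_mat[OF B C]] sum2_lessThan_mult_nat
    using B C kron_index[of _ B _ C]
    by (subst sum4_swap_middle) (intro sum.cong refl, simp add: carrier_matD)
  also have "\<dots> = (\<Sum>i<M. \<Sum>j<M. mtrace (block N A i j * C) * B $$ (j,i))"
    unfolding mtrace_mult[OF block_carrier_mat C]
    by (intro sum.cong refl) (simp add: sum_distrib_left sum_distrib_right ac_simps)
  also have "\<dots> = mtrace (mat M M (\<lambda>(i,j). mtrace (block N A i j * C)) * B)"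
    by (subst mtrace_mult[OF _ B]) auto
  finally show ?thesis .
qed

text \<open>
  Expanding A in blocks, the frame identity for f turns the sum over x into a sum of
  frob_sq over the partial traces of A against g y, and the identity for g finishes.
\<close>
lemma tight_frame_kron:
  assumes f: "tight_frame M S f" and g: "tight_frame N T g"
  shows "tight_frame (M*N) (S \<times> T) (\<lambda>(x,y). kron (f x) (g y))"
proof -
  have "(\<Sum>(x,y)\<in>S \<times> T. (cmod (mtrace (A * kron (f x) (g y))))\<^sup>2) = real (M*N) * frob_sq A"
    if A: "A \<in> carrier_mat (M*N) (M*N)" for A
  proof -
    define Q where "Q y = mat M M (\<lambda>(i,j). mtrace (block N A i j * g y))" for y
    have Q: "Q y \<in> carrier_mat M M" for y unfolding Q_def by (rule carrier_matI) simp_all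
    have "(\<Sum>(x,y)\<in>S \<times> T. (cmod (mtrace (A * kron (f x) (g y))))\<^sup>2)
        = (\<Sum>y\<in>T. \<Sum>x\<in>S. (cmod (mtrace (Q y * f x)))\<^sup>2)"
      unfolding Q_def sum.cartesian_product[symmetric]
      using mtrace_mult_kron_blocks[OF A tight_frameD(2)[OF f] tight_frameD(2)[OF g]]
      by (subst sum.swap) (auto intro!: sum.cong)
    also have "\<dots> = real M * (\<Sum>i<M. \<Sum>j<M. \<Sum>y\<in>T. (cmod (mtrace (block N A i j * g y)))\<^sup>2)"
      unfolding tight_frameD(3)[OF f Q] sum_distrib_left[symmetric] frob_sq_def
      by (simp add: Q_def sum.swap[of _ T])
    also have "\<dots> = real (M*N) * frob_sq A"
      unfolding tight_frameD(3)[OF g block_carrier_mat] frob_sq_blocks[OF A]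
      by (simp add: sum_distrib_left mult.assoc)
    finally show ?thesis .
  qed
  then show ?thesis
    using f g kron_carrier_mat unfolding tight_frame_def by (auto simp: split_def)
qed

section \<open>The single-qudit Pauli basis\<close>

definition omega :: "nat \<Rightarrow> complex" where
  "omega d = cis (2 * pi / real d)"

lemma omega_pow: "omega d ^ m = cis (real m * (2 * pi / real d))"
  unfolding omega_def by (simp add: DeMoivre)

lemma omega_pow_self: "d > 0 \<Longrightarrow> omega d ^ d = 1"
  unfolding omega_pow by simp

lemma norm_omega [simp]: "cmod (omega d) = 1"
  unfolding omega_def by simp

lemma omega_pow_eq_1_iff:
  assumes d: "d > 0" shows "omega d ^ m = 1 \<longleftrightarrow> d dvd m"
proof
  assume "omega d ^ m = 1"
  then have "cos (real m * (2 * pi / real d)) = 1" unfolding omega_pow by (simp add: complex_eq_iff)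
  then obtain k :: int where "real m * (2 * pi / real d) = k * 2 * pi" by (auto simp: cos_one_2pi_int)
  then have "real m = k * real d" using d by (simp add: field_simps)
  then have "int m = k * int d" by (metis of_int_eq_iff of_int_mult of_int_of_nat_eq)
  then show "d dvd m" by (metis dvd_triv_right int_dvd_int_iff)
qed (auto simp: power_mult omega_pow_self[OF d])

lemma sum_omega_pow_power:
  assumes d: "d > 0" shows "(\<Sum>t<d. (omega d ^ m) ^ t) = (if d dvd m then of_nat d else 0)"
proof (cases "d dvd m")
  case False
  then have ne: "omega d ^ m \<noteq> 1" using omega_pow_eq_1_iff[OF d] by simp
  have "(omega d ^ m) ^ d = 1"
    by (simp add: power_mult[symmetric] mult.commute[of m d] power_mult omega_pow_self[OF d])
  then show ?thesis using False by (simp add: geometric_sum[OF ne])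
next
  case True
  then have "omega d ^ m = 1" using omega_pow_eq_1_iff[OF d] by simp
  then show ?thesis using True by simp
qed

lemma omega_pow_mult_cnj:
  assumes d: "d > 0" and k': "k' < d"
  shows "omega d ^ (k*t) * cnj (omega d ^ (k'*t)) = (omega d ^ (k + d - k')) ^ t"
proof -
  define b where "b = omega d ^ (k'*t)"
  have bb: "b * cnj b = 1" unfolding b_def
    using complex_norm_square[of "omega d ^ (k'*t)"] by (simp add: norm_power)
  have "(omega d ^ (k + d - k')) ^ t * b = (omega d ^ (k + d - k') * omega d ^ k') ^ t"
    unfolding b_def by (simp add: power_mult_distrib power_mult mult.commute)
  also have "omega d ^ (k + d - k') * omega d ^ k' = omega d ^ (k + d)"
    using k' by (simp add: power_add[symmetric])
  also have "(omega d ^ (k + d)) ^ t = omega d ^ (k*t)"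
    using omega_pow_self[OF d] by (simp add: power_add power_mult[symmetric] mult.commute)
  finally have "omega d ^ (k*t) * cnj b = (omega d ^ (k + d - k')) ^ t * (b * cnj b)"
    by (simp add: mult.assoc)
  then have "omega d ^ (k*t) * cnj b = (omega d ^ (k + d - k')) ^ t" using bb by simp
  then show ?thesis unfolding b_def .
qed

lemma omega_characters_orthogonal:
  assumes k: "k < d" and k': "k' < d"
  shows "(\<Sum>t<d. omega d ^ (k*t) * cnj (omega d ^ (k'*t))) = (if k = k' then of_nat d else 0)"
proof -
  have d: "d > 0" using k by simp
  have "(\<Sum>t<d. omega d ^ (k*t) * cnj (omega d ^ (k'*t))) = (\<Sum>t<d. (omega d ^ (k + d - k')) ^ t)"
    by (simp only: omega_pow_mult_cnj[OF d k'])
  also have "\<dots> = (if d dvd (k + d - k') then of_nat d else 0)"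
    by (rule sum_omega_pow_power[OF d])
  also have "d dvd (k + d - k') \<longleftrightarrow> k = k'"
    \<comment> \<open>since 0 < k + d - k' < 2 d\<close>
    using k k' by (metis add_diff_cancel_left' gcd_nat.eq_iff linorder_not_less
        mod_nat_eqI order_less_not_sym trans_le_add2)
  finally show ?thesis .
qed

lemma dft_plancherel:
  fixes y :: "nat \<Rightarrow> complex"
  shows "(\<Sum>t<d. (cmod (\<Sum>k<d. y k * omega d ^ (k*t)))\<^sup>2) = real d * (\<Sum>k<d. (cmod (y k))\<^sup>2)"
proof -
  have "complex_of_real (\<Sum>t<d. (cmod (\<Sum>k<d. y k * omega d ^ (k*t)))\<^sup>2)
      = (\<Sum>t<d. \<Sum>k<d. \<Sum>k'<d. (y k * omega d ^ (k*t)) * cnj (y k' * omega d ^ (k'*t)))"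
    by (simp only: of_real_sum complex_norm_square cnj_sum sum_product)
  also have "\<dots> = (\<Sum>k<d. \<Sum>k'<d. \<Sum>t<d. (y k * cnj (y k')) * (omega d ^ (k*t) * cnj (omega d ^ (k'*t))))"
    by (subst sum.swap, rule sum.cong[OF refl], subst sum.swap) (simp only: complex_cnj_mult ac_simps)
  also have "\<dots> = (\<Sum>k<d. \<Sum>k'<d. (y k * cnj (y k')) * (if k = k' then of_nat d else 0))"
    unfolding sum_distrib_left[symmetric]
  proof (intro sum.cong refl)
    fix k k' assume "k \<in> {..<d}" "k' \<in> {..<d}"
    then show "y k * cnj (y k') * (\<Sum>t<d. omega d ^ (k*t) * cnj (omega d ^ (k'*t)))
        = y k * cnj (y k') * (if k = k' then of_nat d else 0)"
      by (simp only: omega_characters_orthogonal lessThan_iff)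
  qed
  also have "\<dots> = (\<Sum>k<d. of_nat d * (y k * cnj (y k)))"
  proof (intro sum.cong refl)
    fix k assume "k \<in> {..<d}"
    have "(\<Sum>k'<d. y k * cnj (y k') * (if k = k' then of_nat d else 0))
        = (\<Sum>k'<d. if k = k' then of_nat d * (y k * cnj (y k)) else 0)"
      by (intro sum.cong refl) simp
    then show "(\<Sum>k'<d. y k * cnj (y k') * (if k = k' then of_nat d else 0)) = of_nat d * (y k * cnj (y k))"
      using \<open>k \<in> {..<d}\<close> by (simp add: sum.delta')
  qed
  also have "\<dots> = complex_of_real (real d * (\<Sum>k<d. (cmod (y k))\<^sup>2))"
    by (simp only: of_real_mult of_real_sum complex_norm_square sum_distrib_left of_real_of_nat_eq)
  finally show ?thesis by (simp only: of_real_eq_iff)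
qed

lemma shiftX_carrier_mat: "shiftX d \<in> carrier_mat d d"
  unfolding shiftX_def by (rule carrier_matI) simp_all

lemma clockZ_carrier_mat: "clockZ d \<in> carrier_mat d d"
  unfolding clockZ_def by (rule carrier_matI) simp_all

lemma pauli1_carrier_mat: "pauli1 d a \<in> carrier_mat d d"
  unfolding pauli1_def using shiftX_carrier_mat clockZ_carrier_mat
  by (metis mult_carrier_mat pow_carrier_mat)

lemma pauli1_dim [simp]: "dim_row (pauli1 d a) = d" "dim_col (pauli1 d a) = d"
  using pauli1_carrier_mat[of d a] by (simp_all add: carrier_matD)

lemma clockZ_index:
  assumes "j < d" "k < d"
  shows "clockZ d $$ (j,k) = (if j = k then omega d ^ j else 0)"
proof -
  have "exp (complex_of_real (2 * pi) * \<i> * of_nat j / of_nat d) = omega d ^ j"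
    unfolding omega_pow cis_conv_exp by (simp add: field_simps)
  then show ?thesis unfolding clockZ_def by (simp only: index_mat[OF assms] prod.case)
qed

lemma shiftX_pow_index:
  assumes "j < d" "k < d"
  shows "(shiftX d ^\<^sub>m s) $$ (j,k) = (if j = (k+s) mod d then 1 else 0)"
  using assms
proof (induction s arbitrary: j k)
  case 0
  then show ?case using shiftX_carrier_mat[of d] by (simp add: carrier_matD)
next
  case (Suc s)
  have "(shiftX d ^\<^sub>m Suc s) $$ (j,k) = (\<Sum>l<d. (shiftX d ^\<^sub>m s) $$ (j,l) * shiftX d $$ (l,k))"
    using Suc.prems shiftX_carrier_mat[of d] by (simp add: carrier_matD scalar_prod_def atLeast0LessThan)
  also have "\<dots> = (\<Sum>l<d. if l = (k+1) mod d then (if j = (l+s) mod d then 1 else 0) else 0)"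
    using Suc.prems Suc.IH by (intro sum.cong refl) (simp add: shiftX_def)
  also have "\<dots> = (if j = ((k+1) mod d + s) mod d then 1 else 0)"
    using Suc.prems by (simp add: sum.delta)
  also have "((k+1) mod d + s) mod d = (k + Suc s) mod d" by (simp add: mod_add_left_eq)
  finally show ?case .
qed

lemma clockZ_pow_index:
  assumes "j < d" "k < d"
  shows "(clockZ d ^\<^sub>m t) $$ (j,k) = (if j = k then omega d ^ (j*t) else 0)"
  using assms
proof (induction t arbitrary: j k)
  case 0
  then show ?case using clockZ_carrier_mat[of d] by (simp add: carrier_matD)
next
  case (Suc t)
  have "(clockZ d ^\<^sub>m Suc t) $$ (j,k) = (\<Sum>l<d. (clockZ d ^\<^sub>m t) $$ (j,l) * clockZ d $$ (l,k))"
    using Suc.prems clockZ_carrier_mat[of d] by (simp add: carrier_matD scalar_prod_def atLeast0LessThan)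
  also have "\<dots> = (\<Sum>l<d. if l = j then (if j = k then omega d ^ (j*t) * omega d ^ j else 0) else 0)"
    using Suc.prems Suc.IH by (intro sum.cong refl) (auto simp: clockZ_index)
  also have "\<dots> = (if j = k then omega d ^ (j * Suc t) else 0)"
    using Suc.prems by (simp add: sum.delta power_add[symmetric] algebra_simps)
  finally show ?case .
qed

lemma pauli1_index:
  assumes "j < d" "k < d"
  shows "pauli1 d (s,t) $$ (j,k) = (if j = (k+s) mod d then omega d ^ (k*t) else 0)"
proof -
  have "pauli1 d (s,t) $$ (j,k) = (\<Sum>l<d. (shiftX d ^\<^sub>m s) $$ (j,l) * (clockZ d ^\<^sub>m t) $$ (l,k))"
    unfolding pauli1_def using assms shiftX_carrier_mat[of d] clockZ_carrier_mat[of d]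
    by (simp add: carrier_matD scalar_prod_def atLeast0LessThan)
  also have "\<dots> = (\<Sum>l<d. if l = k then (if j = (k+s) mod d then omega d ^ (k*t) else 0) else 0)"
    using assms by (intro sum.cong refl) (auto simp: shiftX_pow_index clockZ_pow_index)
  finally show ?thesis using assms by (simp add: sum.delta)
qed

lemma pauli1_0_0: "pauli1 d (0,0) = 1\<^sub>m d"
  unfolding pauli1_def using shiftX_carrier_mat[of d] clockZ_carrier_mat[of d] by (simp add: carrier_matD)

lemma mtrace_mult_pauli1:
  assumes A: "A \<in> carrier_mat d d"
  shows "mtrace (A * pauli1 d (s,t)) = (\<Sum>i<d. A $$ (i, (i+s) mod d) * omega d ^ (i*t))"
  unfolding mtrace_mult[OF A pauli1_carrier_mat]
  by (intro sum.cong refl) (simp add: pauli1_index if_distrib[of "\<lambda>x. _ * x"] sum.delta' cong: if_cong)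

lemma mod_add_eq_if:
  assumes "i < (d::nat)" "a < d" shows "(i + a) mod d = (if i + a < d then i + a else i + a - d)"
  using assms by (simp add: le_mod_geq)

lemma sum_lessThan_rotate_mod:
  fixes f :: "nat \<Rightarrow> 'a::comm_monoid_add"
  assumes i: "i < d"
  shows "(\<Sum>s<d. f ((i+s) mod d)) = (\<Sum>j<d. f j)"
proof (rule sum.reindex_bij_witness[of _ "\<lambda>j. (j + d - i) mod d" "\<lambda>s. (i+s) mod d"])
  fix a assume a: "a \<in> {..<d}"
  show "((i + a) mod d + d - i) mod d = a"
    using a i by (auto simp: mod_add_eq_if)
  show "(i + a) mod d \<in> {..<d}" using i by simp
next
  fix b assume b: "b \<in> {..<d}"
  have "(i + (b + d - i) mod d) mod d = (i + (b + d - i)) mod d" by (simp add: mod_add_right_eq)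
  also have "i + (b + d - i) = b + d" using i by simp
  finally show "(i + (b + d - i) mod d) mod d = b" using b by simp
  show "(b + d - i) mod d \<in> {..<d}" using i by simp
qed simp

text \<open>
  For fixed shift s, the coefficients over t are the discrete Fourier transform of the
  s-th wrapped diagonal of A; Plancherel and a sum over s recover all entries of A.
\<close>
lemma tight_frame_pauli1: "tight_frame d ({0..<d} \<times> {0..<d}) (pauli1 d)"
proof -
  have "(\<Sum>a\<in>{0..<d} \<times> {0..<d}. (cmod (mtrace (A * pauli1 d a)))\<^sup>2) = real d * frob_sq A"
    if A: "A \<in> carrier_mat d d" for A
  proof -
    have "(\<Sum>a\<in>{0..<d} \<times> {0..<d}. (cmod (mtrace (A * pauli1 d a)))\<^sup>2)
        = (\<Sum>s<d. \<Sum>t<d. (cmod (mtrace (A * pauli1 d (s,t))))\<^sup>2)"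
      by (simp add: sum.cartesian_product atLeast0LessThan split_def)
    also have "\<dots> = (\<Sum>s<d. \<Sum>t<d. (cmod (\<Sum>i<d. A $$ (i, (i+s) mod d) * omega d ^ (i*t)))\<^sup>2)"
      by (simp add: mtrace_mult_pauli1[OF A])
    also have "\<dots> = real d * (\<Sum>s<d. \<Sum>i<d. (cmod (A $$ (i, (i+s) mod d)))\<^sup>2)"
      by (simp only: dft_plancherel sum_distrib_left)
    also have "\<dots> = real d * (\<Sum>i<d. \<Sum>s<d. (cmod (A $$ (i, (i+s) mod d)))\<^sup>2)"
      by (subst sum.swap) (rule refl)
    also have "\<dots> = real d * frob_sq A"
      unfolding frob_sq_def using A sum_lessThan_rotate_mod[where f="\<lambda>j. (cmod (A $$ (_, j)))\<^sup>2"]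
      by (simp add: carrier_matD)
    finally show ?thesis .
  qed
  then show ?thesis unfolding tight_frame_def using pauli1_carrier_mat by auto
qed

lemma mtrace_pauli1_eq_0:
  assumes "s < d" "t < d" "(s,t) \<noteq> (0,0)"
  shows "mtrace (pauli1 d (s,t)) = 0"
proof -
  have d: "d > 0" using assms by simp
  have "mtrace (pauli1 d (s,t)) = (\<Sum>i<d. if i = (i+s) mod d then omega d ^ (i*t) else 0)"
    unfolding mtrace_def by (intro sum.cong) (simp_all add: pauli1_index)
  also have "\<dots> = 0"
  proof (cases "s = 0")
    case True
    then have "(\<Sum>i<d. if i = (i+s) mod d then omega d ^ (i*t) else 0) = (\<Sum>i<d. (omega d ^ t) ^ i)"
      by (intro sum.cong refl) (simp add: power_mult[symmetric] mult.commute)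
    also have "\<dots> = 0" using sum_omega_pow_power[OF d, of t] True assms by (simp add: nat_dvd_not_less)
    finally show ?thesis .
  next
    case False
    then have "i \<noteq> (i+s) mod d" if "i < d" for i
      using that assms by (simp add: mod_add_eq_if, linarith)
    then show ?thesis by simp
  qed
  finally show ?thesis .
qed

lemma frob_sq_pauli1:
  assumes "s < d" shows "frob_sq (pauli1 d (s,t)) = real d"
proof -
  have "frob_sq (pauli1 d (s,t)) = (\<Sum>j<d. \<Sum>k<d. if j = (k+s) mod d then 1 else 0)"
    unfolding frob_sq_def by (intro sum.cong) (simp_all add: pauli1_index norm_power)
  then show ?thesis by (simp add: sum.swap[of _ "{..<d}" "{..<d}"] sum.delta)
qed

lemma pauli_Nil [simp]: "pauli d [] = 1\<^sub>m 1"
  by (simp add: pauli_def)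

lemma pauli_Cons [simp]: "pauli d (a # as) = kron (pauli1 d a) (pauli d as)"
  by (simp add: pauli_def)

lemma pauli_carrier_mat: "pauli d as \<in> carrier_mat (d ^ length as) (d ^ length as)"
  by (induction as) (simp_all add: kron_carrier_mat[OF pauli1_carrier_mat])

lemma pauli_vecs_0: "pauli_vecs d 0 = {[]}"
  by (auto simp: pauli_vecs_def)

lemma pauli_vecs_Suc:
  "pauli_vecs d (Suc n) = (\<lambda>(a,as). a # as) ` (({0..<d} \<times> {0..<d}) \<times> pauli_vecs d n)"
proof
  show "pauli_vecs d (Suc n) \<subseteq> (\<lambda>(a,as). a # as) ` (({0..<d} \<times> {0..<d}) \<times> pauli_vecs d n)"
  proof
    fix xs assume "xs \<in> pauli_vecs d (Suc n)"
    then obtain a as where "xs = a # as" "length as = n" "set (a # as) \<subseteq> {0..<d} \<times> {0..<d}"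
      unfolding pauli_vecs_def by (cases xs) auto
    then show "xs \<in> (\<lambda>(a,as). a # as) ` (({0..<d} \<times> {0..<d}) \<times> pauli_vecs d n)"
      unfolding pauli_vecs_def by (intro image_eqI[where x="(a,as)"]) auto
  qed
qed (auto simp: pauli_vecs_def)

lemma inj_on_Cons_pair: "inj_on (\<lambda>(a,as). a # as) S"
  by (auto simp: inj_on_def)

lemma finite_pauli_vecs: "finite (pauli_vecs d n)"
  by (induction n) (simp_all add: pauli_vecs_0 pauli_vecs_Suc)

lemma pauli_vecsD:
  "as \<in> pauli_vecs d n \<Longrightarrow> length as = n"
  "as \<in> pauli_vecs d n \<Longrightarrow> set as \<subseteq> {0..<d} \<times> {0..<d}"
  unfolding pauli_vecs_def by simp_all

lemma pauli_carrier_mat_pauli_vecs: "as \<in> pauli_vecs d n \<Longrightarrow> pauli d as \<in> carrier_mat (d^n) (d^n)"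
  using pauli_carrier_mat[of d as] by (simp add: pauli_vecsD)

lemma tight_frame_pauli: "tight_frame (d ^ n) (pauli_vecs d n) (pauli d)"
proof (induction n)
  case 0
  show ?case
    unfolding tight_frame_def pauli_vecs_0 by (auto simp: mtrace_def frob_sq_def)
next
  case (Suc n)
  have "tight_frame (d * d ^ n) (({0..<d} \<times> {0..<d}) \<times> pauli_vecs d n) (pauli d \<circ> (\<lambda>(a,as). a # as))"
    using tight_frame_kron[OF tight_frame_pauli1 Suc.IH] by (simp add: comp_def split_def)
  then show ?case
    unfolding pauli_vecs_Suc by (simp add: tight_frame_reindex inj_on_Cons_pair)
qed

lemma frob_sq_pauli: "set as \<subseteq> {0..<d} \<times> {0..<d} \<Longrightarrow> frob_sq (pauli d as) = real d ^ length as"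
proof (induction as)
  case Nil
  then show ?case by (simp add: frob_sq_def)
next
  case (Cons a as)
  then show ?case by (cases a) (auto simp: frob_sq_kron frob_sq_pauli1)
qed

lemma pweight_Cons: "pweight (a # as) = (if a = (0,0) then 0 else 1) + pweight as"
  by (simp add: pweight_def)

lemma pweight_le_length: "pweight as \<le> length as"
  unfolding pweight_def by simp

lemma mtrace_pauli_mult_eq_0:
  assumes "length as = length bs" "set bs \<subseteq> {0..<d} \<times> {0..<d}" "pweight as < pweight bs"
  shows "mtrace (pauli d as * pauli d bs) = 0"
  using assms
proof (induction as bs rule: list_induct2)
  case Nil
  then show ?case by (simp add: pweight_def)
next
  case (Cons a as b bs)
  have "mtrace (pauli d (a#as) * pauli d (b#bs)) = mtrace (pauli1 d a * pauli1 d b) * mtrace (pauli d as * pauli d bs)"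
    using pauli_carrier_mat[of d bs] Cons.hyps
    by (simp add: mtrace_kron_mult[OF pauli1_carrier_mat pauli1_carrier_mat pauli_carrier_mat])
  moreover have "mtrace (pauli1 d a * pauli1 d b) = 0" if "\<not> pweight as < pweight bs"
  proof -
    obtain s t where b: "b = (s,t)" by (cases b)
    have "a = (0,0)" "b \<noteq> (0,0)" using Cons.prems that by (auto simp: pweight_Cons split: if_splits)
    then show ?thesis using Cons.prems b by (simp add: pauli1_0_0 mtrace_pauli1_eq_0)
  qed
  ultimately show ?case using Cons by fastforce
qed

lemma pauli_prob_nonneg: "0 \<le> pauli_prob d n A as"
  unfolding pauli_prob_def by simp

lemma sum_pauli_prob:
  assumes d: "d > 0" and A: "A \<in> carrier_mat (d^n) (d^n)"
  shows "(\<Sum>as\<in>pauli_vecs d n. pauli_prob d n A as) = frob_sq A / real d ^ n"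
proof -
  have "(\<Sum>as\<in>pauli_vecs d n. pauli_prob d n A as) = real d ^ n * frob_sq A / real d ^ (2*n)"
    using tight_frameD(3)[OF tight_frame_pauli A]
    unfolding pauli_prob_def by (simp add: sum_divide_distrib[symmetric])
  also have "real d ^ (2*n) = real d ^ n * real d ^ n" by (simp add: mult_2 power_add)
  finally show ?thesis using d by simp
qed

lemma norm2_eq_1_iff:
  assumes "d > 0" shows "norm2 d n A = 1 \<longleftrightarrow> frob_sq A = real d ^ n"
  unfolding norm2_def frob_sq_eq_mtrace[symmetric] using assms by auto

lemma sum_pauli_prob_eq_1:
  assumes "d > 0" "A \<in> carrier_mat (d^n) (d^n)" "norm2 d n A = 1"
  shows "(\<Sum>as\<in>pauli_vecs d n. pauli_prob d n A as) = 1"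
  using assms by (simp add: sum_pauli_prob norm2_eq_1_iff)

lemma influence_nonneg: "0 \<le> influence d n A"
  unfolding influence_def by (intro sum_nonneg mult_nonneg_nonneg pauli_prob_nonneg) simp

lemma influence_le:
  assumes "d > 0" "A \<in> carrier_mat (d^n) (d^n)" "norm2 d n A = 1"
  shows "influence d n A \<le> real n"
proof -
  have "influence d n A \<le> (\<Sum>as\<in>pauli_vecs d n. real n * pauli_prob d n A as)"
    unfolding influence_def using pweight_le_length
    by (intro sum_mono mult_right_mono pauli_prob_nonneg) (metis of_nat_le_iff pauli_vecsD(1))
  also have "\<dots> = real n"
    by (simp add: sum_distrib_left[symmetric] sum_pauli_prob_eq_1[OF assms])
  finally show ?thesis .
qed

lemma influence_pauli_pweight_1:
  assumes d: "d > 0" and as: "as \<in> pauli_vecs d n" and w: "pweight as = 1"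
  shows "influence d n (pauli d as) \<le> 1"
proof -
  have "real (pweight bs) * pauli_prob d n (pauli d as) bs \<le> pauli_prob d n (pauli d as) bs"
    if bs: "bs \<in> pauli_vecs d n" for bs
  proof (cases "pweight bs \<le> 1")
    case False
    then have "mtrace (pauli d as * pauli d bs) = 0"
      using as bs w by (intro mtrace_pauli_mult_eq_0) (auto simp: pauli_vecsD)
    then show ?thesis by (simp add: pauli_prob_def)
  qed (simp add: mult_left_le_one_le pauli_prob_nonneg)
  then have "influence d n (pauli d as) \<le> (\<Sum>bs\<in>pauli_vecs d n. pauli_prob d n (pauli d as) bs)"
    unfolding influence_def by (rule sum_mono)
  also have "\<dots> = 1"
    using sum_pauli_prob[OF d pauli_carrier_mat_pauli_vecs[OF as]] frob_sq_pauli[OF pauli_vecsD(2)[OF as]]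
    using d by (simp add: pauli_vecsD(1)[OF as])
  finally show ?thesis .
qed

lemma sum_pauli_vecs_power_pweight:
  assumes d: "d > 0"
  shows "(\<Sum>as\<in>pauli_vecs d n. lam ^ pweight as) = (1 + (real d ^ 2 - 1) * lam) ^ n"
proof (induction n)
  case 0
  then show ?case by (simp add: pauli_vecs_0 pweight_def)
next
  case (Suc n)
  let ?V = "{0..<d} \<times> {0..<d}"
  have V0: "(0,0) \<in> ?V" using d by simp
  have "(\<Sum>a\<in>?V. lam ^ (if a = (0,0) then 0 else 1)) = 1 + (\<Sum>a\<in>?V - {(0,0)}. lam)"
    using sum.remove[OF _ V0, of "\<lambda>a. lam ^ (if a = (0,0) then 0 else 1)"] by simp
  also have "\<dots> = 1 + (real d ^ 2 - 1) * lam"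
    using V0 d by (simp add: card_cartesian_product power2_eq_square of_nat_diff)
  finally have V: "(\<Sum>a\<in>?V. lam ^ (if a = (0,0) then 0 else 1)) = 1 + (real d ^ 2 - 1) * lam" .
  have "(\<Sum>as\<in>pauli_vecs d (Suc n). lam ^ pweight as)
      = (\<Sum>(a,as)\<in>?V \<times> pauli_vecs d n. lam ^ pweight (a # as))"
    unfolding pauli_vecs_Suc by (subst sum.reindex[OF inj_on_Cons_pair]) (simp add: comp_def split_def)
  also have "\<dots> = (\<Sum>a\<in>?V. \<Sum>as\<in>pauli_vecs d n. lam ^ (if a = (0,0) then 0 else 1) * lam ^ pweight as)"
    by (simp add: sum.cartesian_product pweight_Cons power_add split_def)
  also have "\<dots> = (\<Sum>a\<in>?V. lam ^ (if a = (0,0) then 0 else 1)) * (\<Sum>as\<in>pauli_vecs d n. lam ^ pweight as)"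
    by (simp add: sum_product)
  finally show ?case using V Suc.IH by simp
qed

section \<open>Entropy bound\<close>

lemma neg_mult_ln_le:
  fixes p q :: real
  assumes p: "0 \<le> p" and q: "0 < q"
  shows "- (if p = 0 then 0 else p * ln p) \<le> q - p - p * ln q"
proof (cases "p = 0")
  case False
  then have p: "0 < p" using p by simp
  have "p * ln (q / p) \<le> p * (q / p - 1)"
    using p q by (intro mult_left_mono ln_le_minus_one) auto
  also have "p * (q / p - 1) = q - p" using p by (simp add: field_simps)
  finally have "p * (ln q - ln p) \<le> q - p" using p q by (simp add: ln_div)
  then show ?thesis using False by (simp add: algebra_simps)
qed (use q in simp)

text \<open>Gibbs' inequality against the unnormalised weights lam ^ w x.\<close>
lemma entropy_le_weight_enumerator:
  fixes p :: "'x \<Rightarrow> real" and w :: "'x \<Rightarrow> nat"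
  assumes p: "\<And>x. x \<in> S \<Longrightarrow> 0 \<le> p x" and p1: "(\<Sum>x\<in>S. p x) = 1" and lam: "0 < lam"
  shows "- (\<Sum>x\<in>S. if p x = 0 then 0 else p x * log 2 (p x))
     \<le> ((\<Sum>x\<in>S. lam ^ w x) - 1 - ln lam * (\<Sum>x\<in>S. real (w x) * p x)) / ln 2"
proof -
  have "- (\<Sum>x\<in>S. if p x = 0 then 0 else p x * ln (p x))
      \<le> (\<Sum>x\<in>S. lam ^ w x - p x - p x * ln (lam ^ w x))"
    unfolding sum_negf[symmetric] using lam by (intro sum_mono neg_mult_ln_le p) simp_all
  also have "\<dots> = (\<Sum>x\<in>S. lam ^ w x) - 1 - ln lam * (\<Sum>x\<in>S. real (w x) * p x)"
    using lam by (simp add: sum_subtractf p1 sum_distrib_left ln_realpow ac_simps)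
  finally have "- (\<Sum>x\<in>S. if p x = 0 then 0 else p x * ln (p x)) / ln 2
      \<le> ((\<Sum>x\<in>S. lam ^ w x) - 1 - ln lam * (\<Sum>x\<in>S. real (w x) * p x)) / ln 2"
    by (rule divide_right_mono) simp_all
  also have "- (\<Sum>x\<in>S. if p x = 0 then 0 else p x * ln (p x)) / ln 2
      = - (\<Sum>x\<in>S. if p x = 0 then 0 else p x * log 2 (p x))"
    unfolding sum_divide_distrib minus_divide_left[symmetric] log_def
    by (intro arg_cong[where f=uminus] sum.cong refl) simp
  finally show ?thesis .
qed

lemma one_plus_pow_le_exp_1:
  assumes n: "n \<ge> 1" and d: "d \<ge> 1"
  shows "(1 + (real d ^ 2 - 1) / (real n * real d ^ 2)) ^ n \<le> exp 1"
proof -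
  have "(real d ^ 2 - 1) / (real n * real d ^ 2) \<le> real d ^ 2 / (real n * real d ^ 2)"
    using n d by (intro divide_right_mono) auto
  also have "\<dots> = 1 / real n" using d by simp
  finally have "(1 + (real d ^ 2 - 1) / (real n * real d ^ 2)) ^ n \<le> (1 + 1 / real n) ^ n"
    using d by (intro power_mono) auto
  also have "\<dots> \<le> exp 1" using n by (intro exp_ge_one_plus_x_over_n_power_n) auto
  finally show ?thesis .
qed

lemma ln_2_ge_half: "1/2 \<le> ln (2::real)"
proof -
  have "exp (1/2::real) ^ 2 = exp 1" by (simp add: exp_of_nat_mult[symmetric])
  also have "\<dots> < 2 ^ 2" using exp_le by simp
  finally have "exp (1/2::real) < 2" by (rule power_less_imp_less_base) simp
  then show ?thesis by (subst ln_ge_iff) auto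
qed

lemma pauli_entropy_le_influence:
  assumes d: "d > 0" and n: "n \<ge> 1" and A: "A \<in> carrier_mat (d^n) (d^n)" and "norm2 d n A = 1"
  shows "pauli_entropy d n A \<le> 4 + influence d n A * (log 2 (real n) + 2 * log 2 (real d))"
proof -
  define lam where "lam = 1 / (real n * real d ^ 2)"
  have lam: "0 < lam" unfolding lam_def using n d by simp
  have Z: "(\<Sum>as\<in>pauli_vecs d n. lam ^ pweight as) \<le> 3"
    using one_plus_pow_le_exp_1[OF n, of d] exp_le d
    unfolding sum_pauli_vecs_power_pweight[OF d] lam_def by simp
  have "- ln lam = ln (real n) + 2 * ln (real d)"
    unfolding lam_def using n d by (simp add: ln_div ln_mult ln_realpow)
  then have ln_lam: "- ln lam / ln 2 = log 2 (real n) + 2 * log 2 (real d)"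
    unfolding log_def by (simp add: add_divide_distrib)
  have "pauli_entropy d n A \<le> ((\<Sum>as\<in>pauli_vecs d n. lam ^ pweight as) - 1 - ln lam * influence d n A) / ln 2"
    unfolding pauli_entropy_def Let_def influence_def
    by (rule entropy_le_weight_enumerator[OF pauli_prob_nonneg
          sum_pauli_prob_eq_1[OF d A assms(4)] lam])
  also have "\<dots> \<le> (2 - ln lam * influence d n A) / ln 2"
    using Z by (intro divide_right_mono) auto
  also have "\<dots> = 2 / ln 2 + influence d n A * (- ln lam / ln 2)"
    by (simp add: diff_divide_distrib)
  also have "2 / ln 2 \<le> (4::real)" using ln_2_ge_half by (simp add: pos_divide_le_eq)
  finally show ?thesis unfolding ln_lam by simp
qed

section \<open>Circuit sensitivity and magic entropy\<close>

lemma norm2_unitary_conj: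
  assumes "unitary_mat (d^n) U" "A \<in> carrier_mat (d^n) (d^n)"
  shows "norm2 d n (U * A * adj U) = norm2 d n A"
  unfolding norm2_def frob_sq_eq_mtrace[symmetric] frob_sq_unitary_conj[OF assms] ..

lemma circuit_sensitivity_ge:
  assumes d: "d > 0" and U: "unitary_mat (d^n) U"
    and A: "A \<in> carrier_mat (d^n) (d^n)" and A1: "norm2 d n A = 1"
  shows "\<bar>influence d n (U * A * adj U) - influence d n A\<bar> \<le> circuit_sensitivity d n U"
  unfolding circuit_sensitivity_def
proof (rule cSup_upper)
  show "bdd_above ((\<lambda>A. \<bar>influence d n (U * A * adj U) - influence d n A\<bar>) `
          {A \<in> carrier_mat (d ^ n) (d ^ n). norm2 d n A = 1})"
  proof (rule bdd_aboveI2)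
    fix B assume "B \<in> {B \<in> carrier_mat (d ^ n) (d ^ n). norm2 d n B = 1}"
    then have B: "B \<in> carrier_mat (d^n) (d^n)" "norm2 d n B = 1" by auto
    have "influence d n B \<le> real n" "influence d n (U * B * adj U) \<le> real n"
      using influence_le[OF d B] influence_le[OF d unitary_conj_carrier_mat[OF U B(1)]]
        norm2_unitary_conj[OF U B(1)] B(2) by simp_all
    then show "\<bar>influence d n (U * B * adj U) - influence d n B\<bar> \<le> real n"
      using influence_nonneg[of d n B] influence_nonneg[of d n "U * B * adj U"] by linarith
  qed
qed (use A A1 in auto)

lemma circuit_sensitivity_nonneg:
  assumes "d > 0" "unitary_mat (d^n) U"
  shows "0 \<le> circuit_sensitivity d n U"
proof -
  have I: "replicate n (0,0) \<in> pauli_vecs d n"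
    using assms(1) by (auto simp: pauli_vecs_def set_replicate_conv_if)
  have "norm2 d n (pauli d (replicate n (0,0))) = 1"
    using assms(1) frob_sq_pauli[OF pauli_vecsD(2)[OF I]] by (simp add: norm2_eq_1_iff)
  then show ?thesis
    using circuit_sensitivity_ge[OF assms pauli_carrier_mat_pauli_vecs[OF I]] by linarith
qed

lemma influence_unitary_conj_pauli_le:
  assumes d: "d > 0" and U: "unitary_mat (d^n) U" and as: "as \<in> pauli_vecs d n" and "pweight as = 1"
  shows "influence d n (U * pauli d as * adj U) \<le> circuit_sensitivity d n U + 1"
proof -
  have "norm2 d n (pauli d as) = 1"
    using d frob_sq_pauli[OF pauli_vecsD(2)[OF as]] by (simp add: norm2_eq_1_iff pauli_vecsD(1)[OF as])
  then show ?thesis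
    using circuit_sensitivity_ge[OF d U pauli_carrier_mat_pauli_vecs[OF as]]
      influence_pauli_pweight_1[OF d as assms(4)] by linarith
qed

lemma pweight_1_pauli_vecs_nonempty:
  assumes "d \<ge> 2" "n \<ge> 1"
  shows "{as \<in> pauli_vecs d n. pweight as = 1} \<noteq> {}"
proof -
  have "(1,0) # replicate (n - 1) (0,0) \<in> {as \<in> pauli_vecs d n. pweight as = 1}"
    using assms by (auto simp: pauli_vecs_def pweight_def)
  then show ?thesis by blast
qed

lemma magic_entropy_le:
  assumes d: "d \<ge> 2" and n: "n \<ge> 1" and U: "unitary_mat (d^n) U"
  shows "magic_entropy d n U
     \<le> 4 + (circuit_sensitivity d n U + 1) * (log 2 (real n) + 2 * log 2 (real d))"
  unfolding magic_entropy_def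
proof (rule Max.boundedI)
  fix h assume "h \<in> (\<lambda>as. pauli_entropy d n (U * pauli d as * adj U)) ` {as \<in> pauli_vecs d n. pweight as = 1}"
  then obtain as where as: "as \<in> pauli_vecs d n" "pweight as = 1"
    and h: "h = pauli_entropy d n (U * pauli d as * adj U)" by auto
  have P: "pauli d as \<in> carrier_mat (d^n) (d^n)" by (rule pauli_carrier_mat_pauli_vecs[OF as(1)])
  have "norm2 d n (U * pauli d as * adj U) = 1"
    using d frob_sq_pauli[OF pauli_vecsD(2)[OF as(1)]]
    by (simp add: norm2_unitary_conj[OF U P] norm2_eq_1_iff pauli_vecsD(1)[OF as(1)])
  then have "h \<le> 4 + influence d n (U * pauli d as * adj U) * (log 2 (real n) + 2 * log 2 (real d))"
    unfolding h using d n by (intro pauli_entropy_le_influence unitary_conj_carrier_mat[OF U P]) auto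
  also have "\<dots> \<le> 4 + (circuit_sensitivity d n U + 1) * (log 2 (real n) + 2 * log 2 (real d))"
    using d n influence_unitary_conj_pauli_le[OF _ U as] by (intro add_left_mono mult_right_mono) auto
  finally show "h \<le> 4 + (circuit_sensitivity d n U + 1) * (log 2 (real n) + 2 * log 2 (real d))" .
qed (use d n pweight_1_pauli_vecs_nonempty finite_pauli_vecs in auto)

theorem mainTheorem14:
  shows "\<exists>c::real. \<forall>d n::nat. \<forall>U. d \<ge> 2 \<longrightarrow> n \<ge> 1 \<longrightarrow> unitary_mat (d ^ n) U \<longrightarrow>
     magic_entropy d n U \<le> c * (log 2 (real n) + log 2 (real d)) * (circuit_sensitivity d n U + 1)"
proof (intro exI[of _ 6] allI impI)
  fix d n :: nat and U assume d: "d \<ge> 2" and n: "n \<ge> 1" and U: "unitary_mat (d ^ n) U"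
  define L where "L = log 2 (real n) + log 2 (real d)"
  define C where "C = circuit_sensitivity d n U"
  have log_n: "0 \<le> log 2 (real n)" and log_d: "1 \<le> log 2 (real d)" using n d by simp_all
  have C: "0 \<le> C" unfolding C_def using d U by (intro circuit_sensitivity_nonneg) auto
  have "magic_entropy d n U \<le> 4 + (C + 1) * (log 2 (real n) + 2 * log 2 (real d))"
    unfolding C_def by (rule magic_entropy_le[OF d n U])
  also have "\<dots> \<le> 4 * (L * (C + 1)) + 2 * (L * (C + 1))"
  proof -
    have "1 * 1 \<le> L * (C + 1)" using log_n log_d C unfolding L_def by (intro mult_mono) auto
    moreover have "(C + 1) * (log 2 (real n) + 2 * log 2 (real d)) \<le> 2 * (L * (C + 1))"
      using log_n C unfolding L_def by (simp add: algebra_simps mult_left_mono)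
    ultimately show ?thesis by linarith
  qed
  finally show "magic_entropy d n U \<le> 6 * L * (C + 1)" by (simp add: algebra_simps)
qed

end
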